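(* Let $n\ge 1$ and $L\ge 1$. For each $i=1,\dots,n$ let $\Phi_i$ be a network of the form $\Phi_i(\mathbf{e})=\mathbf{W}_i^{L}\,\sigma(\mathbf{W}_i^{L-1}(\cdots\sigma(\mathbf{W}_i^{1}\mathbf{e})))$, where each $\sigma$ is applied elementwise and is either $\sin(\cdot)$ or $\texttt{ReLU}(\cdot)$, and where the input $\mathbf{e}$ is a coordinate in an arbitrary spectral coordinate system (e.g. a truncated Laplacian eigenvector embedding of a graph node). Define the factorized model $$\Phi(\mathbf{e}_1,\dots,\mathbf{e}_n)=\mathcal{M}\times_1\Phi_1(\mathbf{e}_1)\times_2\Phi_2(\mathbf{e}_2)\cdots\times_n\Phi_n(\mathbf{e}_n),$$ where $\mathcal{M}$ is a core tensor of compatible size and $\times_k$ is the mode-$k$ tensor–vector product. Assume that the $\ell_1$ norm of every weight matrix $\mathbf{W}_i^{(\ell)}$ is bounded by $\xi$ and the $\ell_1$ norm of $\mathcal{M}$ is bounded by $\eta$. Let $\delta=\max\{|\mathbf{e}_i| : i=1,\dots,n\}$ (and analogously including primed coordinates where they appear). Then for every $k\in\{1,\dots,n\}$, $$|\Phi(\mathbf{e}_1,\dots,\mathbf{e}_k,\dots,\mathbf{e}_n)-\Phi(\mathbf{e}_1,\dots,\mathbf{e}_k',\dots,\mathbf{e}_n)|\le\eta\,\xi^{nL}\,\delta^{n-1}\,|\mathbf{e}_k-\mathbf{e}_k'|,$$ so $\Phi$ is Lipschitz continuous in each argument of an arbitrary spectral coordinate system.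
   Context: $|\cdot|$ denotes the $\ell_1$ norm (for matrices, the corresponding norm bounding $|\mathbf{W}\mathbf{x}|\le|\mathbf{W}||\mathbf{x}|$). The networks have no bias terms. The mode-$k$ product of a tensor $\mathcal{M}\in\mathbb{R}^{n_1\times\cdots\times n_n}$ with a vector $\mathbf{u}\in\mathbb{R}^{n_k}$ contracts the $k$-th index of $\mathcal{M}$ against $\mathbf{u}$; after all $n$ products the result is a scalar. *)

theory Defs
  imports "HOL-Analysis.Analysis"
begin

text \<open>Vectors are functions nat => real with an explicit dimension; matrices nat => nat => real
  (row, column) with explicit row/column counts. Indices start at 0.\<close>

definition relu :: "real \<Rightarrow> real" where
  "relu x = max 0 x"

definition vnorm1 :: "nat \<Rightarrow> (nat \<Rightarrow> real) \<Rightarrow> real" where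
  "vnorm1 m x = (\<Sum>i<m. \<bar>x i\<bar>)"

text \<open>Induced l1 operator norm of an m x n matrix: maximal absolute column sum.\<close>
definition mat_norm1 :: "(nat \<Rightarrow> nat \<Rightarrow> real) \<Rightarrow> nat \<Rightarrow> nat \<Rightarrow> real" where
  "mat_norm1 A m n = Max (insert 0 {(\<Sum>i<m. \<bar>A i j\<bar>) | j. j < n})"

definition matvec :: "(nat \<Rightarrow> nat \<Rightarrow> real) \<Rightarrow> nat \<Rightarrow> (nat \<Rightarrow> real) \<Rightarrow> (nat \<Rightarrow> real)" where
  "matvec A n x = (\<lambda>i. \<Sum>j<n. A i j * x j)"

text \<open>Bias-free MLP: mlp act W d L e = W_L act_{L-1}( ... act_1 (W_1 e)),
  where W l is a (d l) x (d (l-1)) matrix and act l is applied elementwise after layer l.\<close>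
fun mlp :: "(nat \<Rightarrow> real \<Rightarrow> real) \<Rightarrow> (nat \<Rightarrow> nat \<Rightarrow> nat \<Rightarrow> real) \<Rightarrow> (nat \<Rightarrow> nat)
             \<Rightarrow> nat \<Rightarrow> (nat \<Rightarrow> real) \<Rightarrow> (nat \<Rightarrow> real)" where
  "mlp act W d 0 e = e"
| "mlp act W d (Suc 0) e = matvec (W 1) (d 0) e"
| "mlp act W d (Suc (Suc l)) e =
     matvec (W (Suc (Suc l))) (d (Suc l)) (\<lambda>j. act (Suc l) (mlp act W d (Suc l) e j))"

text \<open>Multi-indices of an order-n tensor with mode sizes r 0, ..., r (n-1).\<close>
definition tindices :: "nat \<Rightarrow> (nat \<Rightarrow> nat) \<Rightarrow> (nat \<Rightarrow> nat) set" where
  "tindices n r = PiE {..<n} (\<lambda>i. {..<r i})"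

definition tensor_norm1 :: "nat \<Rightarrow> (nat \<Rightarrow> nat) \<Rightarrow> ((nat \<Rightarrow> nat) \<Rightarrow> real) \<Rightarrow> real" where
  "tensor_norm1 n r M = (\<Sum>J\<in>tindices n r. \<bar>M J\<bar>)"

text \<open>Full contraction M x_1 u_1 x_2 u_2 ... x_n u_n (all mode products).\<close>
definition contract :: "nat \<Rightarrow> (nat \<Rightarrow> nat) \<Rightarrow> ((nat \<Rightarrow> nat) \<Rightarrow> real) \<Rightarrow> (nat \<Rightarrow> nat \<Rightarrow> real) \<Rightarrow> real" where
  "contract n r M u = (\<Sum>J\<in>tindices n r. M J * (\<Prod>i<n. u i (J i)))"

text \<open>Factorized model Phi(e_0..e_{n-1}) = M x_1 Phi_0(e_0) ... x_n Phi_{n-1}(e_{n-1});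
  network i has weights W i l (l = 1..L), layer widths d i l (l = 0..L), activations act i l.\<close>
definition fact_model :: "nat \<Rightarrow> nat \<Rightarrow> ((nat \<Rightarrow> nat) \<Rightarrow> real) \<Rightarrow> (nat \<Rightarrow> nat \<Rightarrow> real \<Rightarrow> real)
    \<Rightarrow> (nat \<Rightarrow> nat \<Rightarrow> nat \<Rightarrow> nat \<Rightarrow> real) \<Rightarrow> (nat \<Rightarrow> nat \<Rightarrow> nat) \<Rightarrow> (nat \<Rightarrow> nat \<Rightarrow> real) \<Rightarrow> real" where
  "fact_model n L M act W d e =
     contract n (\<lambda>i. d i L) M (\<lambda>i. mlp (act i) (W i) (d i) L (e i))"

end

theory Submission
  imports Defs
begin

(* Each network alternates linear maps of l1 operator norm at most xi with 1-Lipschitz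
   activations fixing 0, so it is xi^L-Lipschitz and sends inputs of norm at most delta
   to outputs of norm at most xi^L delta. The contraction with the core tensor is
   multilinear and bounded by |M| times the product of the norms of its arguments, so
   changing only the k-th input moves the model by at most
   eta (xi^L delta)^(n-1) xi^L |e_k - e_k'|. *)

lemma lipschitz_on_sin: "1-lipschitz_on (U :: real set) sin"
proof (rule lipschitz_onI)
  fix a b :: real
  have "\<bar>sin a - sin b\<bar> = 2 * \<bar>sin ((a - b) / 2)\<bar> * \<bar>cos ((a + b) / 2)\<bar>"
    by (simp add: sin_diff_sin abs_mult)
  also have "\<dots> \<le> 2 * \<bar>(a - b) / 2\<bar> * 1"
    by (intro mult_mono abs_sin_x_le_abs_x) auto
  finally show "dist (sin a) (sin b) \<le> 1 * dist a b"
    by (simp add: dist_real_def)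
qed simp

lemma lipschitz_on_relu: "1-lipschitz_on U relu"
  by (rule lipschitz_onI) (auto simp: relu_def dist_real_def)

lemma vnorm1_nonneg: "0 \<le> vnorm1 m x"
  by (simp add: vnorm1_def sum_nonneg)

lemma abs_le_vnorm1: "j < m \<Longrightarrow> \<bar>x j\<bar> \<le> vnorm1 m x"
  unfolding vnorm1_def by (rule member_le_sum) auto

lemma mat_norm1_nonneg: "0 \<le> mat_norm1 A m n"
  unfolding mat_norm1_def by (rule Max_ge) auto

lemma mat_norm1_le_imp_nonneg: "mat_norm1 A m n \<le> c \<Longrightarrow> 0 \<le> c"
  using mat_norm1_nonneg order_trans by blast

lemma column_sum_le_mat_norm1: "j < n \<Longrightarrow> (\<Sum>i<m. \<bar>A i j\<bar>) \<le> mat_norm1 A m n"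
  unfolding mat_norm1_def by (rule Max_ge) auto

lemma vnorm1_matvec_le: "vnorm1 m (matvec A n x) \<le> mat_norm1 A m n * vnorm1 n x"
proof -
  have "vnorm1 m (matvec A n x) = (\<Sum>i<m. \<bar>\<Sum>j<n. A i j * x j\<bar>)"
    by (simp add: vnorm1_def matvec_def)
  also have "\<dots> \<le> (\<Sum>i<m. \<Sum>j<n. \<bar>A i j\<bar> * \<bar>x j\<bar>)"
    by (intro sum_mono order_trans[OF sum_abs]) (simp add: abs_mult)
  also have "\<dots> = (\<Sum>j<n. (\<Sum>i<m. \<bar>A i j\<bar>) * \<bar>x j\<bar>)"
    by (subst sum.swap) (simp add: sum_distrib_right)
  also have "\<dots> \<le> (\<Sum>j<n. mat_norm1 A m n * \<bar>x j\<bar>)"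
    by (intro sum_mono mult_right_mono column_sum_le_mat_norm1) auto
  also have "\<dots> = mat_norm1 A m n * vnorm1 n x"
    by (simp add: vnorm1_def sum_distrib_left)
  finally show ?thesis .
qed

lemma matvec_diff: "(\<lambda>i. matvec A n x i - matvec A n y i) = matvec A n (\<lambda>j. x j - y j)"
  by (simp add: matvec_def sum_subtractf[symmetric] right_diff_distrib)

lemma vnorm1_matvec_diff_le:
  assumes "mat_norm1 A m n \<le> c" "0 \<le> c" "vnorm1 n (\<lambda>j. x j - y j) \<le> b"
  shows "vnorm1 m (\<lambda>i. matvec A n x i - matvec A n y i) \<le> c * b"
proof -
  have "vnorm1 m (\<lambda>i. matvec A n x i - matvec A n y i) \<le> mat_norm1 A m n * vnorm1 n (\<lambda>j. x j - y j)"
    unfolding matvec_diff by (rule vnorm1_matvec_le)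
  also have "\<dots> \<le> c * b"
    using assms by (intro mult_mono) (auto simp: vnorm1_nonneg)
  finally show ?thesis .
qed

lemma mlp_lipschitz:
  assumes "\<forall>l\<in>{1..<L}. 1-lipschitz_on UNIV (act l)"
    and "\<forall>l\<in>{1..L}. mat_norm1 (W l) (d l) (d (l - 1)) \<le> \<xi>"
  shows "vnorm1 (d L) (\<lambda>j. mlp act W d L x j - mlp act W d L y j)
         \<le> \<xi> ^ L * vnorm1 (d 0) (\<lambda>j. x j - y j)"
  using assms
proof (induction act W d L x arbitrary: y rule: mlp.induct)
  case (1 act W d x)
  then show ?case by simp
next
  case (2 act W d x)
  have "mat_norm1 (W 1) (d 1) (d 0) \<le> \<xi>"
    using "2.prems"(2) by simp
  moreover have "0 \<le> \<xi>"
    using calculation by (rule mat_norm1_le_imp_nonneg)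
  ultimately show ?case
    by (simp only: mlp.simps power_one_right) (rule vnorm1_matvec_diff_le, auto)
next
  case (3 act W d l x)
  let ?h = "\<lambda>z j. act (Suc l) (mlp act W d (Suc l) z j)"
  have "0 \<le> \<xi>"
    using "3.prems"(2) mat_norm1_le_imp_nonneg[of "W 1"] by force
  have IH: "vnorm1 (d (Suc l)) (\<lambda>j. mlp act W d (Suc l) x j - mlp act W d (Suc l) y j)
      \<le> \<xi> ^ Suc l * vnorm1 (d 0) (\<lambda>j. x j - y j)"
    using "3.prems" by (intro "3.IH") auto
  have "1-lipschitz_on UNIV (act (Suc l))"
    using "3.prems"(1) by simp
  then have "vnorm1 (d (Suc l)) (\<lambda>j. ?h x j - ?h y j)
      \<le> vnorm1 (d (Suc l)) (\<lambda>j. mlp act W d (Suc l) x j - mlp act W d (Suc l) y j)"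
    unfolding vnorm1_def by (intro sum_mono) (auto dest: lipschitz_onD simp: dist_real_def)
  with IH have "vnorm1 (d (Suc l)) (\<lambda>j. ?h x j - ?h y j) \<le> \<xi> ^ Suc l * vnorm1 (d 0) (\<lambda>j. x j - y j)"
    by linarith
  moreover have "mat_norm1 (W (Suc (Suc l))) (d (Suc (Suc l))) (d (Suc l)) \<le> \<xi>"
    using "3.prems"(2) by force
  ultimately show ?case
    using \<open>0 \<le> \<xi>\<close> by (simp only: mlp.simps power_Suc mult.assoc) (rule vnorm1_matvec_diff_le)
qed

lemma mlp_zero:
  assumes "\<forall>l\<in>{1..<L}. act l 0 = 0"
  shows "mlp act W d L (\<lambda>_. 0) = (\<lambda>_. 0)"
  using assms
  by (induction act W d L "\<lambda>_::nat. 0::real" rule: mlp.induct) (auto simp: matvec_def)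

lemma vnorm1_mlp_le:
  assumes "\<forall>l\<in>{1..<L}. 1-lipschitz_on UNIV (act l) \<and> act l 0 = 0"
    and "\<forall>l\<in>{1..L}. mat_norm1 (W l) (d l) (d (l - 1)) \<le> \<xi>"
  shows "vnorm1 (d L) (mlp act W d L x) \<le> \<xi> ^ L * vnorm1 (d 0) x"
  using mlp_lipschitz[of L act W d \<xi> x "\<lambda>_. 0"] mlp_zero[of L act W d] assms by simp

lemma tensor_norm1_nonneg: "0 \<le> tensor_norm1 n r M"
  by (simp add: tensor_norm1_def sum_nonneg)

lemma contract_diff_fun_upd:
  assumes "k < n"
  shows "contract n r M u - contract n r M (u(k := v)) = contract n r M (u(k := \<lambda>j. u k j - v j))"
proof -
  have "(\<Prod>i<n. f i) = f k * (\<Prod>i\<in>{..<n}-{k}. f i)" for f :: "nat \<Rightarrow> real"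
    using assms by (intro prod.remove) auto
  then show ?thesis
    unfolding contract_def sum_subtractf[symmetric]
    by (intro sum.cong) (simp_all add: algebra_simps)
qed

lemma abs_contract_le:
  "\<bar>contract n r M u\<bar> \<le> tensor_norm1 n r M * (\<Prod>i<n. vnorm1 (r i) (u i))"
proof -
  have "\<bar>contract n r M u\<bar> \<le> (\<Sum>J\<in>tindices n r. \<bar>M J\<bar> * (\<Prod>i<n. \<bar>u i (J i)\<bar>))"
    unfolding contract_def by (rule order_trans[OF sum_abs]) (simp add: abs_mult abs_prod)
  also have "\<dots> \<le> (\<Sum>J\<in>tindices n r. \<bar>M J\<bar> * (\<Prod>i<n. vnorm1 (r i) (u i)))"
    by (intro sum_mono mult_left_mono prod_mono conjI abs_le_vnorm1)
      (auto simp: tindices_def PiE_iff)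
  also have "\<dots> = tensor_norm1 n r M * (\<Prod>i<n. vnorm1 (r i) (u i))"
    by (simp add: tensor_norm1_def sum_distrib_right)
  finally show ?thesis .
qed

lemma contract_diff_le:
  assumes "k < n" and "\<forall>i\<in>{..<n}-{k}. vnorm1 (r i) (u i) \<le> B"
  shows "\<bar>contract n r M u - contract n r M (u(k := v))\<bar>
         \<le> tensor_norm1 n r M * B ^ (n - 1) * vnorm1 (r k) (\<lambda>j. u k j - v j)"
proof -
  let ?u = "u(k := \<lambda>j. u k j - v j)"
  have "(\<Prod>i<n. vnorm1 (r i) (?u i)) = vnorm1 (r k) (?u k) * (\<Prod>i\<in>{..<n}-{k}. vnorm1 (r i) (?u i))"
    using assms(1) by (intro prod.remove) auto
  also have "\<dots> \<le> vnorm1 (r k) (?u k) * (\<Prod>i\<in>{..<n}-{k}. B)"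
    using assms(2) by (intro mult_left_mono prod_mono) (auto simp: vnorm1_nonneg)
  finally have "(\<Prod>i<n. vnorm1 (r i) (?u i)) \<le> B ^ (n - 1) * vnorm1 (r k) (\<lambda>j. u k j - v j)"
    using assms(1) by (simp add: mult.commute)
  then show ?thesis
    unfolding contract_diff_fun_upd[OF assms(1)] mult.assoc
    by (intro order_trans[OF abs_contract_le] mult_left_mono tensor_norm1_nonneg)
qed

theorem lemma5:
  fixes n L k :: nat
    and d :: "nat \<Rightarrow> nat \<Rightarrow> nat"
    and W :: "nat \<Rightarrow> nat \<Rightarrow> nat \<Rightarrow> nat \<Rightarrow> real"
    and act :: "nat \<Rightarrow> nat \<Rightarrow> real \<Rightarrow> real"
    and M :: "(nat \<Rightarrow> nat) \<Rightarrow> real"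
    and \<xi> \<eta> :: real
    and e :: "nat \<Rightarrow> nat \<Rightarrow> real"
    and e' :: "nat \<Rightarrow> real"
  assumes "n \<ge> 1" and "L \<ge> 1"
    and "\<forall>i<n. \<forall>l\<in>{1..<L}. act i l = sin \<or> act i l = relu"
    and "\<forall>i<n. \<forall>l\<in>{1..L}. mat_norm1 (W i l) (d i l) (d i (l - 1)) \<le> \<xi>"
    and "tensor_norm1 n (\<lambda>i. d i L) M \<le> \<eta>"
    and "k < n"
  shows "\<bar>fact_model n L M act W d e - fact_model n L M act W d (e(k := e'))\<bar>
         \<le> \<eta> * \<xi> ^ (n * L)
             * (Max ({vnorm1 (d i 0) (e i) | i. i < n} \<union> {vnorm1 (d k 0) e'})) ^ (n - 1)
             * vnorm1 (d k 0) (\<lambda>j. e k j - e' j)"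
proof -
  define u where "u = (\<lambda>i. mlp (act i) (W i) (d i) L (e i))"
  define v where "v = mlp (act k) (W k) (d k) L e'"
  define \<delta> where "\<delta> = Max ({vnorm1 (d i 0) (e i) | i. i < n} \<union> {vnorm1 (d k 0) e'})"
  have act: "\<forall>l\<in>{1..<L}. 1-lipschitz_on UNIV (act i l) \<and> act i l 0 = 0" if "i < n" for i
    using assms(3) that lipschitz_on_sin lipschitz_on_relu by (fastforce simp: relu_def)
  have "0 \<le> \<xi>"
    using assms(1,2,4) mat_norm1_le_imp_nonneg[of "W 0 1"] by force
  have "0 \<le> \<eta>"
    using assms(5) tensor_norm1_nonneg order_trans by blast
  have \<delta>: "vnorm1 (d i 0) (e i) \<le> \<delta>" if "i < n" for i
    unfolding \<delta>_def using that by (intro Max_ge) auto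
  then have "0 \<le> \<delta>"
    using assms(6) vnorm1_nonneg order_trans by blast
  have u_le: "vnorm1 (d i L) (u i) \<le> \<xi> ^ L * \<delta>" if "i < n" for i
  proof -
    have "vnorm1 (d i L) (u i) \<le> \<xi> ^ L * vnorm1 (d i 0) (e i)"
      unfolding u_def by (rule vnorm1_mlp_le) (use act[OF that] assms(4) that in auto)
    also have "\<dots> \<le> \<xi> ^ L * \<delta>"
      using \<delta>[OF that] \<open>0 \<le> \<xi>\<close> by (simp add: mult_left_mono)
    finally show ?thesis .
  qed
  have "fact_model n L M act W d (e(k := e')) = contract n (\<lambda>i. d i L) M (u(k := v))"
    unfolding fact_model_def u_def v_def by (rule arg_cong[where f = "contract n _ M"]) auto
  then have "\<bar>fact_model n L M act W d e - fact_model n L M act W d (e(k := e'))\<bar>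
      = \<bar>contract n (\<lambda>i. d i L) M u - contract n (\<lambda>i. d i L) M (u(k := v))\<bar>"
    by (simp add: fact_model_def u_def)
  also have "\<dots> \<le> tensor_norm1 n (\<lambda>i. d i L) M * (\<xi> ^ L * \<delta>) ^ (n - 1) * vnorm1 (d k L) (\<lambda>j. u k j - v j)"
    using assms(6) u_le by (intro contract_diff_le) auto
  also have "\<dots> \<le> \<eta> * (\<xi> ^ L * \<delta>) ^ (n - 1) * (\<xi> ^ L * vnorm1 (d k 0) (\<lambda>j. e k j - e' j))"
    unfolding u_def v_def using act[OF assms(6)] assms(4-6) \<open>0 \<le> \<xi>\<close> \<open>0 \<le> \<eta>\<close> \<open>0 \<le> \<delta>\<close>
    by (intro mult_mono mlp_lipschitz) (auto simp: vnorm1_nonneg)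
  also have "\<dots> = \<eta> * \<xi> ^ (n * L) * \<delta> ^ (n - 1) * vnorm1 (d k 0) (\<lambda>j. e k j - e' j)"
    using assms(1) by (cases n) (simp_all add: power_mult_distrib power_add ac_simps flip: power_mult)
  finally show ?thesis
    unfolding \<delta>_def .
qed

end
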